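(* Let $n\ge 1$ and $k=n^{1/6}$ (assumed to be an integer power of $2$). Consider the GHZ-type correlation problem on $n$ parties with inputs $x\in\{0,\ldots,k-1\}^n$, let $D=\{x:\ (\sum_{i=1}^n x_i)\bmod k=0\}$ be the set of valid inputs, and let $\mu$ be the uniform distribution on $D$. For $x\in D$ let $F(x)=\frac{1}{k}\big[(\sum_{i=1}^n x_i)\bmod 2k\big]\in\{0,1\}$, and let the target correlations be $P(a|x)=2^{-(n-1)}$ if $a_1+\cdots+a_n\equiv F(x)\pmod 2$ and $P(a|x)=0$ otherwise, for $a\in\{0,1\}^n$, $x\in D$. Then for every classical model with shared randomness in which $c$ bits are broadcast, with detection efficiency $\eta$ and error probability $\epsilon$ (as defined in the context), one has \[ \frac{1}{2^{c/n}}\,\eta\,\Big(1-\epsilon\Big[2+O\big(n^{-1/6}\big)\Big]\Big)^{1/n}=O\big(n^{-1/6}\big), \] where the $O$-terms refer to $n\to\infty$ and are uniform over all such models.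
   Context: Classical models with communication: a deterministic model is a rooted protocol tree; each internal node $u$ is labeled by a party $i_u$ who broadcasts which child to go to, according to a partition of party $i_u$'s input set among the edges leaving $u$; each leaf $v$ is labeled by local output functions $\lambda_{v,i}$ mapping party $i$'s input $x_i$ to an output in $\{0,1\}\cup\{\perp\}$, where $\perp$ means "detector did not click". On input $x$ the execution follows the tree to a leaf $v$ and party $i$ outputs $\lambda_{v,i}(x_i)$. The number of bits broadcast is $c=\sum\lceil\log t_j\rceil$ over the numbers $t_j$ of children of the nodes on the path taken (with $c$ the maximum over paths). A classical model with shared randomness is a probability distribution over deterministic models; it induces a conditional output distribution $Q(a|x)$ on $a\in(\{0,1\}\cup\{\perp\})^n$. Let $C$ denote the event (and its indicator) that $a_i\neq\perp$ for all $i$. The detection efficiency is $\eta=\big(\mathbb E_{x\sim\mu}[\sum_a Q(a|x)\,C]\big)^{1/n}$. With $F'$ the indicator of $P(a|x)=0$ (for the target $P$), the error probability is $\epsilon=\mathbb E_{x\sim\mu}\big[\sum_a Q(a|x)\,F'\,C/\eta^n\big]$. *)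

theory Defs
  imports "HOL-Probability.Probability" "HOL-Library.Landau_Symbols"
begin

text \<open>Parties are indexed 0..n-1, inputs are functions x :: nat => nat with x i < k
  for i < n (and x i = 0 for i >= n, so that the input set is finite).
  Outputs are bool option: None is the no-click symbol, Some False / Some True are 0 / 1.\<close>

text \<open>A leaf carries the local output functions
  (party i, its own input x_i) -> output. An internal node carries the speaking party,
  a function mapping that party's input to the index of the child (the partition of
  its input set among the edges), and the list of children.\<close>
datatype ptree =
    Leaf "nat \<Rightarrow> nat \<Rightarrow> bool option"
  | Node nat "nat \<Rightarrow> nat" "ptree list"

primrec run :: "ptree \<Rightarrow> (nat \<Rightarrow> nat) \<Rightarrow> nat \<Rightarrow> bool option" where
  "run (Leaf lam) = (\<lambda>x i. lam i (x i))"
| "run (Node p f ts) = (\<lambda>x. (map run ts ! f (x p)) x)"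

primrec bits :: "ptree \<Rightarrow> nat" where
  "bits (Leaf lam) = 0"
| "bits (Node p f ts) = nat \<lceil>log 2 (real (length ts))\<rceil> + Max (set (0 # map bits ts))"

primrec wf_tree :: "nat \<Rightarrow> nat \<Rightarrow> ptree \<Rightarrow> bool" where
  "wf_tree n k (Leaf lam) = True"
| "wf_tree n k (Node p f ts) =
     (p < n \<and> ts \<noteq> [] \<and> (\<forall>v<k. f v < length ts) \<and> list_all (wf_tree n k) ts)"

text \<open>A classical model with shared randomness: a probability distribution over
  deterministic models, each broadcasting at most c bits.\<close>
definition valid_model :: "nat \<Rightarrow> nat \<Rightarrow> nat \<Rightarrow> ptree pmf \<Rightarrow> bool" where
  "valid_model n k c M = (\<forall>T\<in>set_pmf M. wf_tree n k T \<and> bits T \<le> c)"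

definition inputs :: "nat \<Rightarrow> nat \<Rightarrow> (nat \<Rightarrow> nat) set" where
  "inputs n k = {x. (\<forall>i<n. x i < k) \<and> (\<forall>i\<ge>n. x i = 0)}"

definition validD :: "nat \<Rightarrow> nat \<Rightarrow> (nat \<Rightarrow> nat) set" where
  "validD n k = {x \<in> inputs n k. (\<Sum>i<n. x i) mod k = 0}"

definition ghzF :: "nat \<Rightarrow> nat \<Rightarrow> (nat \<Rightarrow> nat) \<Rightarrow> nat" where
  "ghzF n k x = ((\<Sum>i<n. x i) mod (2 * k)) div k"

text \<open>Target correlations P(a|x) for a in {0,1}^n (a i = True means a_i = 1).\<close>
definition ghzP :: "nat \<Rightarrow> nat \<Rightarrow> (nat \<Rightarrow> bool) \<Rightarrow> (nat \<Rightarrow> nat) \<Rightarrow> real" where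
  "ghzP n k a x = (if (card {i. i < n \<and> a i}) mod 2 = ghzF n k x mod 2
                   then 1 / 2 ^ (n - 1) else 0)"

definition clicks :: "nat \<Rightarrow> ptree \<Rightarrow> (nat \<Rightarrow> nat) \<Rightarrow> bool" where
  "clicks n T x = (\<forall>i<n. run T x i \<noteq> None)"

definition eta :: "nat \<Rightarrow> nat \<Rightarrow> ptree pmf \<Rightarrow> real" where
  "eta n k M = root n ((\<Sum>x\<in>validD n k. measure_pmf.prob M {T. clicks n T x})
                       / real (card (validD n k)))"

definition eps :: "nat \<Rightarrow> nat \<Rightarrow> ptree pmf \<Rightarrow> real" where
  "eps n k M = (\<Sum>x\<in>validD n k.
       measure_pmf.prob M {T. clicks n T x \<and> ghzP n k (\<lambda>i. run T x i = Some True) x = 0}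
         / eta n k M ^ n) / real (card (validD n k))"

end

theory Submission
  imports Defs
begin

definition rect :: "nat \<Rightarrow> (nat \<Rightarrow> 'a set) \<Rightarrow> (nat \<Rightarrow> 'a::zero) set" where
  "rect m A = {x. (\<forall>i<m. x i \<in> A i) \<and> (\<forall>i\<ge>m. x i = 0)}"

lemma rect_Suc: "rect (Suc m) A = (\<lambda>(u, x). x(m := u)) ` (A m \<times> rect m A)"
proof
  show "rect (Suc m) A \<subseteq> (\<lambda>(u, x). x(m := u)) ` (A m \<times> rect m A)"
  proof
    fix x assume x: "x \<in> rect (Suc m) A"
    have "x = (\<lambda>(u, x). x(m := u)) (x m, x(m := 0))" by auto
    moreover have "(x m, x(m := 0)) \<in> A m \<times> rect m A"
      using x by (auto simp: rect_def less_Suc_eq)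
    ultimately show "x \<in> (\<lambda>(u, x). x(m := u)) ` (A m \<times> rect m A)" by blast
  qed
  show "(\<lambda>(u, x). x(m := u)) ` (A m \<times> rect m A) \<subseteq> rect (Suc m) A"
    by (auto simp: rect_def less_Suc_eq)
qed

lemma inj_on_rect_Suc: "inj_on (\<lambda>(u, x). x(m := u)) (A m \<times> rect m A)"
proof (rule inj_onI, clarify)
  fix u x u' x'
  assume x: "x \<in> rect m A" and x': "x' \<in> rect m A" and eq: "x(m := u) = x'(m := u')"
  have "u = u'" using fun_cong[OF eq, of m] by simp
  moreover have "x = x'"
  proof
    fix i show "x i = x' i"
      using fun_cong[OF eq, of i] x x' by (cases "i = m") (auto simp: rect_def)
  qed
  ultimately show "u = u' \<and> x = x'" by simp
qed

lemma sum_rect_Suc: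
  "(\<Sum>x\<in>rect (Suc m) A. h x) = (\<Sum>u\<in>A m. \<Sum>x\<in>rect m A. h (x(m := u)))"
  unfolding rect_Suc sum.reindex[OF inj_on_rect_Suc] sum.cartesian_product
  by (simp add: case_prod_unfold)

lemma rect_0: "rect 0 A = {\<lambda>_. 0}"
  by (auto simp: rect_def)

lemma finite_rect: "(\<And>i. i < m \<Longrightarrow> finite (A i)) \<Longrightarrow> finite (rect m A)"
  by (induction m) (simp_all add: rect_0 rect_Suc)

lemma inputs_eq_rect: "inputs n k = rect n (\<lambda>_. {..<k})"
  by (auto simp: inputs_def rect_def)

primrec zero_sum_count :: "nat \<Rightarrow> nat \<Rightarrow> (nat \<Rightarrow> nat set) \<Rightarrow> nat \<Rightarrow> real" where
  "zero_sum_count N 0 Y s = (if N dvd s then 1 else 0)"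
| "zero_sum_count N (Suc m) Y s = (\<Sum>y\<in>Y m. zero_sum_count N m Y (s + y))"

lemma sum_fun_upd_lessThan_Suc:
  "(\<Sum>i<Suc m. e i ((x(m := u)) i)) = e m u + (\<Sum>i<m. e i (x i))"
  by (simp add: sum.lessThan_Suc add.commute)

lemma zero_sum_count_image_rect:
  assumes "\<And>i. i < m \<Longrightarrow> inj_on (e i) (A i)"
  shows "zero_sum_count N m (\<lambda>i. e i ` A i) s =
    (\<Sum>x\<in>rect m A. if N dvd s + (\<Sum>i<m. e i (x i)) then 1 else 0)"
  using assms
proof (induction m arbitrary: s)
  case 0
  then show ?case by (simp add: rect_0)
next
  case (Suc m)
  have "zero_sum_count N (Suc m) (\<lambda>i. e i ` A i) s
      = (\<Sum>u\<in>A m. zero_sum_count N m (\<lambda>i. e i ` A i) (s + e m u))"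
    using Suc.prems by (simp add: sum.reindex)
  also have "\<dots> = (\<Sum>u\<in>A m. \<Sum>x\<in>rect m A. if N dvd s + (e m u + (\<Sum>i<m. e i (x i))) then 1 else 0)"
    using Suc by (simp add: add.assoc)
  also have "\<dots> = (\<Sum>u\<in>A m. \<Sum>x\<in>rect m A. if N dvd s + (\<Sum>i<Suc m. e i ((x(m := u)) i)) then 1 else 0)"
    by (simp only: sum_fun_upd_lessThan_Suc)
  finally show ?case by (simp only: sum_rect_Suc)
qed

lemma zero_sum_count_cong:
  "(\<And>i. i < m \<Longrightarrow> Y i = Y' i) \<Longrightarrow> zero_sum_count N m Y s = zero_sum_count N m Y' s"
  by (induction m arbitrary: s) simp_all

lemma zero_sum_count_nonneg: "0 \<le> zero_sum_count N m Y s"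
  by (induction m arbitrary: s) (simp_all add: sum_nonneg)

lemma zero_sum_count_le_prod_card: "zero_sum_count N m Y s \<le> (\<Prod>i<m. card (Y i))"
proof (induction m arbitrary: s)
  case (Suc m)
  have "(\<Sum>y\<in>Y m. zero_sum_count N m Y (s + y)) \<le> (\<Sum>y\<in>Y m. real (\<Prod>i<m. card (Y i)))"
    by (rule sum_mono) (rule Suc.IH)
  then show ?case by (simp add: mult.commute)
qed simp

lemma zero_sum_count_empty: "i < m \<Longrightarrow> Y i = {} \<Longrightarrow> zero_sum_count N m Y s = 0"
  by (induction m arbitrary: s) (auto simp: less_Suc_eq)

lemma zero_sum_count_split:
  assumes "i < m" "finite P" "finite R" "P \<inter> R = {}"
  shows "zero_sum_count N m (Y(i := P \<union> R)) s
    = zero_sum_count N m (Y(i := P)) s + zero_sum_count N m (Y(i := R)) s"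
  using assms(1)
proof (induction m arbitrary: s)
  case (Suc m)
  show ?case
  proof (cases "i = m")
    case True
    have eq: "zero_sum_count N m (Y(m := X)) t = zero_sum_count N m Y t" for X t
      by (rule zero_sum_count_cong) simp
    show ?thesis
      using assms(2-4) by (simp only: True zero_sum_count.simps fun_upd_same eq sum.union_disjoint)
  next
    case False
    then have "i < m" using Suc.prems by simp
    have A: "zero_sum_count N (Suc m) (Y(i := X)) s = (\<Sum>y\<in>Y m. zero_sum_count N m (Y(i := X)) (s + y))" for X
      using False by simp
    have B: "zero_sum_count N m (Y(i := P \<union> R)) t = zero_sum_count N m (Y(i := P)) t + zero_sum_count N m (Y(i := R)) t" for t
      by (rule Suc.IH[OF \<open>i < m\<close>])
    show ?thesis
      unfolding A B by (rule sum.distrib)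
  qed
qed simp

lemma zero_sum_count_eq_0:
  assumes "d dvd N" and "\<And>i u. i < m \<Longrightarrow> u \<in> Y i \<Longrightarrow> u mod d = y i mod d"
    and "\<not> d dvd s + (\<Sum>i<m. y i)"
  shows "zero_sum_count N m Y s = 0"
  using assms(2,3)
proof (induction m arbitrary: s)
  case 0
  then show ?case using dvd_trans[OF assms(1)] by force
next
  case (Suc m)
  have IH: "zero_sum_count N m Y t = 0" if "\<not> d dvd t + (\<Sum>i<m. y i)" for t
    using Suc.IH[OF _ that] Suc.prems(1) by simp
  have "\<not> d dvd (s + u) + (\<Sum>i<m. y i)" if "u \<in> Y m" for u
  proof
    have "(u + (s + (\<Sum>i<m. y i))) mod d = (y m + (s + (\<Sum>i<m. y i))) mod d"
      using Suc.prems(1)[OF _ that] by (intro mod_add_cong) simp_all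
    moreover assume "d dvd (s + u) + (\<Sum>i<m. y i)"
    ultimately show False using Suc.prems(2) by (simp add: dvd_eq_mod_eq_0 add_ac)
  qed
  then show ?case by (simp add: IH)
qed

definition unit_root :: "nat \<Rightarrow> complex" where
  "unit_root N = cis (2 * pi / N)"

lemma unit_root_pow: "unit_root N ^ a = cis (2 * pi * a / N)"
  by (simp add: unit_root_def Complex.DeMoivre mult_ac)

lemma unit_root_pow_eq_1_iff: "0 < N \<Longrightarrow> unit_root N ^ a = 1 \<longleftrightarrow> N dvd a"
  using complex_root_unity_eq_1[of N a]
  by (simp add: unit_root_pow cis_conv_exp mult_ac)

lemma sum_unit_root_pow:
  assumes "0 < N"
  shows "(\<Sum>j<N. unit_root N ^ (j * s)) = (if N dvd s then of_nat N else 0)"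
proof (cases "N dvd s")
  case True
  then have "unit_root N ^ (j * s) = 1" for j
    using assms by (simp add: unit_root_pow_eq_1_iff)
  then show ?thesis using True by simp
next
  case False
  let ?z = "unit_root N ^ s"
  have "?z \<noteq> 1" and "?z ^ N = 1"
    using False assms by (simp_all add: unit_root_pow_eq_1_iff flip: power_mult)
  then have "(\<Sum>j<N. ?z ^ j) = 0" by (simp add: sum_gp_strict)
  moreover have "unit_root N ^ (j * s) = ?z ^ j" for j
    by (metis power_mult mult.commute)
  ultimately show ?thesis using False by simp
qed

lemma zero_sum_count_fourier:
  assumes "0 < N"
  shows "zero_sum_count N m Y s =
    (\<Sum>j<N. unit_root N ^ (j * s) * (\<Prod>i<m. \<Sum>y\<in>Y i. unit_root N ^ (j * y))) / of_nat N"
proof (induction m arbitrary: s)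
  case 0
  then show ?case using sum_unit_root_pow[OF assms, of s] assms by simp
next
  case (Suc m)
  define \<omega> where "\<omega> = unit_root N"
  define P where "P j = (\<Prod>i<m. \<Sum>y\<in>Y i. \<omega> ^ (j * y))" for j
  have "complex_of_real (zero_sum_count N (Suc m) Y s)
      = (\<Sum>y\<in>Y m. complex_of_real (zero_sum_count N m Y (s + y)))"
    by simp
  also have "\<dots> = (\<Sum>y\<in>Y m. \<Sum>j<N. \<omega> ^ (j * s) * \<omega> ^ (j * y) * P j) / of_nat N"
    unfolding Suc.IH sum_divide_distrib \<omega>_def P_def by (simp add: distrib_left power_add)
  also have "\<dots> = (\<Sum>j<N. \<omega> ^ (j * s) * ((\<Sum>y\<in>Y m. \<omega> ^ (j * y)) * P j)) / of_nat N"
    by (subst sum.swap) (simp add: sum_distrib_left sum_distrib_right mult.assoc)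
  finally show ?case by (simp add: \<omega>_def P_def mult.commute)
qed

lemma norm_1_plus_cis: "norm (1 + cis t) = \<bar>2 * cos (t / 2)\<bar>"
proof -
  have "(norm (1 + cis t))\<^sup>2 = (1 + cos t)\<^sup>2 + (sin t)\<^sup>2" by (simp add: cmod_power2)
  also have "\<dots> = 2 + 2 * cos t"
    using sin_cos_squared_add[of t] by (simp add: power2_eq_square algebra_simps)
  also have "cos t = 2 * cos (t / 2) ^ 2 - 1" using cos_double_cos[of "t / 2"] by simp
  finally have "(norm (1 + cis t))\<^sup>2 = \<bar>2 * cos (t / 2)\<bar>\<^sup>2"
    by (simp add: power2_eq_square algebra_simps)
  then show ?thesis by (rule power2_eq_imp_eq) auto
qed

lemma abs_cos_pi_div_le:
  fixes N a :: nat
  assumes "0 < N" "\<not> N dvd a"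
  shows "\<bar>cos (pi * a / N)\<bar> \<le> cos (pi / N)"
proof -
  define r where "r = a mod N"
  have r: "1 \<le> r" "r + 1 \<le> N" using assms by (auto simp: r_def dvd_eq_mod_eq_0 Suc_le_eq)
  have "real a = real r + real N * real (a div N)"
    unfolding r_def by (metis mod_mult_div_eq of_nat_add of_nat_mult)
  then have "pi * a / N = pi * r / N + pi * (a div N)"
    using assms(1) by (simp add: field_simps)
  then have shift: "\<bar>cos (pi * a / N)\<bar> = \<bar>cos (pi * r / N)\<bar>"
    by (simp add: cos_add abs_mult)
  have "1 \<le> real r" "real r + 1 \<le> real N"
    using r by (metis of_nat_1 of_nat_add of_nat_le_iff)+
  then have "pi * 1 \<le> pi * r" "pi * (r + 1) \<le> pi * N"
    by (simp_all add: mult_left_mono)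
  then have b: "pi / N \<le> pi * r / N" "pi * r / N \<le> pi - pi / N"
    using assms(1) by (simp_all add: field_simps)
  have "0 \<le> pi / N" by simp
  then have "cos (pi * r / N) \<le> cos (pi / N)" "cos (pi - pi * r / N) \<le> cos (pi / N)"
    using b by (intro cos_monotone_0_pi_le; linarith)+
  then show ?thesis unfolding shift by (simp add: abs_le_iff)
qed

lemma norm_1_plus_unit_root_pow_le:
  fixes N a :: nat
  assumes "0 < N" "\<not> N dvd a"
  shows "norm (1 + unit_root N ^ a) \<le> 2 * cos (pi / N)"
  using abs_cos_pi_div_le[OF assms]
  by (simp add: unit_root_pow norm_1_plus_cis abs_mult)

lemma sin_pi_div_pow2_ge: "1 / 2 ^ m \<le> sin (pi / 2 ^ (m + 1))"
proof (induction m)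
  case (Suc m)
  define x where "x = pi / 2 ^ (m + 2)"
  have "(1::real) \<le> 2 ^ (m + 2)" by (rule one_le_power) simp
  then have "x \<le> pi / 1" unfolding x_def by (intro divide_left_mono) simp_all
  then have "0 \<le> sin x" by (intro sin_ge_zero) (simp_all add: x_def)
  have "1 / 2 ^ m \<le> sin (2 * x)" using Suc by (simp add: x_def field_simps)
  also have "\<dots> = 2 * sin x * cos x" by (rule sin_double)
  also have "\<dots> \<le> 2 * sin x" using \<open>0 \<le> sin x\<close> by (simp add: mult_left_le)
  finally show ?case by (simp add: x_def field_simps)
qed simp

lemma cos_pi_div_le:
  fixes k :: nat
  assumes "k = 2 ^ J"
  shows "cos (pi / (2 * k)) \<le> 1 - 1 / (2 * k\<^sup>2)"
proof -
  define x where "x = pi / 2 ^ (J + 2)"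
  have "1 / 2 ^ (J + 1) \<le> sin x" using sin_pi_div_pow2_ge[of "J + 1"] by (simp add: x_def)
  then have "(1 / 2 ^ (J + 1))\<^sup>2 \<le> (sin x)\<^sup>2" by (rule power_mono) simp
  moreover have "(1 / (2::real) ^ (J + 1))\<^sup>2 = 1 / (4 * k\<^sup>2)"
    by (simp add: assms power_add power_divide power_mult_distrib)
  ultimately have "1 / (2 * k\<^sup>2) \<le> 2 * (sin x)\<^sup>2" by simp
  moreover have "cos (pi / (2 * k)) = 1 - 2 * (sin x)\<^sup>2"
    using cos_double_sin[of x] by (simp add: assms x_def field_simps)
  ultimately show ?thesis by linarith
qed

lemma cos_pi_div_nonneg:
  fixes k :: nat
  assumes "0 < k"
  shows "0 \<le> cos (pi / (2 * k))"
proof -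
  have "pi / (2 * k) \<le> pi / 2" using assms by (intro divide_left_mono) simp_all
  moreover have "0 \<le> pi / (2 * k)" by simp
  ultimately show ?thesis by (intro cos_ge_zero) linarith+
qed

lemma cos_pi_div_pow_le:
  fixes k :: nat
  assumes "k = 2 ^ J"
  shows "cos (pi / (2 * k)) ^ M \<le> 1 / (1 + M / (2 * k\<^sup>2))"
proof -
  define a :: real where "a = 1 / (2 * k\<^sup>2)"
  define c where "c = cos (pi / (2 * k))"
  have "1 \<le> real k ^ 2" using assms by (simp add: one_le_power)
  then have "0 \<le> a" "a \<le> 1" by (auto simp: a_def divide_le_eq_1)
  have "0 \<le> c" "c \<le> 1 - a" using cos_pi_div_le[OF assms] cos_pi_div_nonneg[of k] assms
    by (simp_all add: a_def c_def)
  have "c ^ M * (1 + M * a) \<le> c ^ M * (1 + a) ^ M"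
    using Bernoulli_inequality[of a M] \<open>0 \<le> a\<close> \<open>0 \<le> c\<close> by (simp add: mult_left_mono)
  also have "\<dots> = (c * (1 + a)) ^ M" by (simp add: power_mult_distrib)
  also have "\<dots> \<le> 1"
  proof (rule power_le_one)
    show "0 \<le> c * (1 + a)" using \<open>0 \<le> a\<close> \<open>0 \<le> c\<close> by simp
    have "c * (1 + a) \<le> (1 - a) * (1 + a)" using \<open>c \<le> 1 - a\<close> \<open>0 \<le> a\<close> by (simp add: mult_right_mono)
    also have "\<dots> \<le> 1" by (simp add: algebra_simps)
    finally show "c * (1 + a) \<le> 1" .
  qed
  finally have "c ^ M * (1 + M * a) \<le> 1" .
  moreover have "0 < 1 + M * a" using \<open>0 \<le> a\<close> by (simp add: add_pos_nonneg)
  ultimately have "c ^ M \<le> 1 / (1 + M * a)" by (simp add: le_divide_eq)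
  then show ?thesis by (simp add: a_def c_def)
qed

lemma cos_pi_div_pow_small:
  fixes k :: nat
  assumes "k = 2 ^ J"
  shows "(2 + 1 / real k) * cos (pi / (2 * real k)) ^ (16 * k ^ 4) \<le> (1 / real k) / (2 * real k)"
proof -
  have k: "1 \<le> real k" using assms by simp
  have "(2 + 1 / real k) * cos (pi / (2 * real k)) ^ (16 * k ^ 4)
      \<le> (2 + 1 / real k) * (1 / (1 + 8 * real k ^ 2))"
    using cos_pi_div_pow_le[OF assms, of "16 * k ^ 4"] k
    by (intro mult_left_mono) (simp_all add: power2_eq_square power4_eq_xxxx)
  also have "\<dots> = (2 * real k + 1) / (real k * (1 + 8 * real k ^ 2))"
    using k by (simp add: field_simps)
  also have "\<dots> \<le> (2 * real k + 1) / ((2 * real k + 1) * (2 * real k ^ 2))"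
  proof (rule divide_left_mono)
    have "real k ^ 2 \<le> real k ^ 3" using k by (intro power_increasing) simp_all
    moreover have "(2 * real k + 1) * (2 * real k ^ 2) = 4 * real k ^ 3 + 2 * real k ^ 2"
      "real k * (1 + 8 * real k ^ 2) = real k + 8 * real k ^ 3"
      by (simp_all add: algebra_simps power2_eq_square power3_eq_cube)
    ultimately show "(2 * real k + 1) * (2 * real k ^ 2) \<le> real k * (1 + 8 * real k ^ 2)"
      using k by (smt (verit) zero_le_power2)
  qed (use k in \<open>simp_all add: zero_less_mult_iff add_pos_nonneg\<close>)
  also have "\<dots> = (1 / real k) / (2 * real k)"
    using k by (simp add: power2_eq_square)
  finally show ?thesis .
qed

definition weighted_count :: "nat \<Rightarrow> real \<Rightarrow> nat \<Rightarrow> (nat \<Rightarrow> nat set) \<Rightarrow> nat \<Rightarrow> real" where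
  "weighted_count k g m Y s =
     zero_sum_count (2 * k) m Y s - (1 + g) * zero_sum_count (2 * k) m Y (s + k)"

lemma unit_root_pow_half: "0 < k \<Longrightarrow> unit_root (2 * k) ^ k = -1"
  by (simp add: unit_root_pow)

lemma unit_root_pow_mult: "0 < d \<Longrightarrow> unit_root (d * D) ^ (d * a) = unit_root D ^ a"
  by (simp add: unit_root_pow mult.assoc)

lemma weighted_count_fourier:
  assumes "0 < k"
  shows "weighted_count k g m Y s =
    (\<Sum>j<2 * k. Re (complex_of_real (1 - (1 + g) * (-1) ^ j) * unit_root (2 * k) ^ (j * s)
        * (\<Prod>i<m. \<Sum>y\<in>Y i. unit_root (2 * k) ^ (j * y)))) / (2 * k)"
proof -
  define \<omega> where "\<omega> = unit_root (2 * k)"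
  define P where "P j = (\<Prod>i<m. \<Sum>y\<in>Y i. \<omega> ^ (j * y))" for j
  define c where "c j = complex_of_real (1 - (1 + g) * (-1) ^ j)" for j :: nat
  have count: "complex_of_real (zero_sum_count (2 * k) m Y t)
      = (\<Sum>j<2 * k. \<omega> ^ (j * t) * P j) / of_nat (2 * k)" for t
    using zero_sum_count_fourier[of "2 * k" m Y t] assms by (simp add: \<omega>_def P_def)
  have half: "\<omega> ^ (j * (s + k)) = (-1) ^ j * \<omega> ^ (j * s)" for j
    using unit_root_pow_half[OF assms]
    by (simp add: \<omega>_def distrib_left power_add mult.commute[of j k] power_mult)
  have "complex_of_real (weighted_count k g m Y s)
      = complex_of_real (zero_sum_count (2 * k) m Y s)
        - complex_of_real (1 + g) * complex_of_real (zero_sum_count (2 * k) m Y (s + k))"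
    unfolding weighted_count_def of_real_diff of_real_mult ..
  also have "\<dots> = (\<Sum>j<2 * k. \<omega> ^ (j * s) * P j - complex_of_real (1 + g) * (\<omega> ^ (j * (s + k)) * P j))
      / of_nat (2 * k)"
    unfolding count sum_subtractf sum_distrib_left diff_divide_distrib times_divide_eq_right ..
  also have "\<dots> = (\<Sum>j<2 * k. c j * \<omega> ^ (j * s) * P j) / of_nat (2 * k)"
    by (intro arg_cong2[where f = "(/)"] sum.cong refl) (unfold half c_def, simp add: algebra_simps)
  finally have "weighted_count k g m Y s = Re ((\<Sum>j<2 * k. c j * \<omega> ^ (j * s) * P j) / of_nat (2 * k))"
    by (metis Re_complex_of_real)
  then show ?thesis by (simp add: Re_divide_of_nat \<omega>_def P_def c_def)
qed

lemma prod_pair_sums: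
  fixes z :: "'a::comm_ring_1" and m :: nat
  assumes "G \<subseteq> {..<m}"
    and "\<And>i. i < m \<Longrightarrow> Y i = (if i \<in> G then {y i, y i + d i} else {y i})"
    and "\<And>i. i \<in> G \<Longrightarrow> d i \<noteq> 0"
  shows "(\<Prod>i<m. \<Sum>u\<in>Y i. z ^ (j * u)) = z ^ (j * (\<Sum>i<m. y i)) * (\<Prod>i\<in>G. 1 + z ^ (j * d i))"
proof -
  have "(\<Prod>i<m. \<Sum>u\<in>Y i. z ^ (j * u))
      = (\<Prod>i<m. z ^ (j * y i) * (if i \<in> G then 1 + z ^ (j * d i) else 1))"
    by (rule prod.cong) (simp_all add: assms distrib_left power_add algebra_simps)
  also have "\<dots> = (\<Prod>i<m. z ^ (j * y i)) * (\<Prod>i<m. if i \<in> G then 1 + z ^ (j * d i) else 1)"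
    by (rule prod.distrib)
  also have "(\<Prod>i<m. if i \<in> G then 1 + z ^ (j * d i) else 1) = (\<Prod>i\<in>G. 1 + z ^ (j * d i))"
    by (rule prod.mono_neutral_cong_right[OF finite_lessThan[of m] assms(1)]) auto
  also have "(\<Prod>i<m. z ^ (j * y i)) = z ^ (j * (\<Sum>i<m. y i))"
    by (simp add: power_sum sum_distrib_left)
  finally show ?thesis .
qed

lemma pair_term_main:
  fixes k J v t :: nat and g :: real
  assumes "k = 2 ^ J" "v \<le> J" "2 ^ v dvd t" "2 ^ (J + 1 - v) dvd j"
  shows "complex_of_real (1 - (1 + g) * (-1) ^ j) * unit_root (2 * k) ^ (j * t)
      * (\<Prod>i\<in>G. 1 + unit_root (2 * k) ^ (j * (2 ^ v * q i))) = complex_of_real (- g * 2 ^ card G)"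
proof -
  have k: "2 * k = 2 ^ (J + 1 - v) * 2 ^ v" "0 < 2 * k"
    using assms(1,2) by (simp_all flip: power_add)
  have "2 * k dvd j * (2 ^ v * a)" for a
    unfolding k(1) using assms(4) by (simp add: mult_dvd_mono mult.assoc)
  then have one: "unit_root (2 * k) ^ (j * (2 ^ v * a)) = 1" for a
    using k(2) unit_root_pow_eq_1_iff by blast
  obtain r where "t = 2 ^ v * r" using assms(3) by blast
  then have "unit_root (2 * k) ^ (j * t) = 1" by (simp add: one)
  moreover have "even j"
    using assms(2,4) by (metis Suc_eq_plus1 Suc_diff_le dvd_power dvd_trans zero_less_Suc)
  ultimately show ?thesis by (simp add: one)
qed

lemma pair_term_norm_le:
  fixes k J v t :: nat and g :: real
  assumes "k = 2 ^ J" "v \<le> J" "\<not> 2 ^ (J + 1 - v) dvd j" "\<And>i. i \<in> G \<Longrightarrow> odd (q i)" "0 \<le> g"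
  shows "norm (complex_of_real (1 - (1 + g) * (-1) ^ j) * unit_root (2 * k) ^ (j * t)
      * (\<Prod>i\<in>G. 1 + unit_root (2 * k) ^ (j * (2 ^ v * q i))))
    \<le> (2 + g) * (2 * cos (pi / (2 * k))) ^ card G"
proof -
  define D :: nat where "D = 2 ^ (J + 1 - v)"
  have k: "2 * k = 2 ^ v * D" "0 < D"
    using assms(1,2) by (simp_all add: D_def flip: power_add)
  have "D \<le> 2 * k"
    unfolding k(1) using mult_le_mono1[OF one_le_power[of 2 v], of D] by simp
  have "norm (1 + unit_root (2 * k) ^ (j * (2 ^ v * q i))) \<le> 2 * cos (pi / (2 * k))" if "i \<in> G" for i
  proof -
    have "coprime D (q i)" using assms(4)[OF that] by (simp add: D_def)
    then have "\<not> D dvd j * q i" using assms(3) by (simp add: D_def coprime_dvd_mult_left_iff)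
    then have "norm (1 + unit_root D ^ (j * q i)) \<le> 2 * cos (pi / D)"
      using k(2) by (rule norm_1_plus_unit_root_pow_le[rotated])
    also have "cos (pi / D) \<le> cos (pi / (2 * k))"
    proof (rule cos_monotone_0_pi_le)
      show "pi / D \<le> pi" using k(2) divide_left_mono[of 1 D pi] by simp
    qed (use k \<open>D \<le> 2 * k\<close> in \<open>simp_all add: frac_le\<close>)
    finally show ?thesis
      unfolding k(1) using unit_root_pow_mult[of "2 ^ v" D "j * q i"] by (simp add: mult_ac)
  qed
  then have prod: "norm (\<Prod>i\<in>G. 1 + unit_root (2 * k) ^ (j * (2 ^ v * q i)))
      \<le> (2 * cos (pi / (2 * k))) ^ card G"
    unfolding prod_norm[symmetric] by (metis (no_types, lifting) norm_ge_zero prod_constant prod_mono)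
  have coeff: "norm (complex_of_real (1 - (1 + g) * (-1) ^ j)) \<le> 2 + g"
    unfolding norm_of_real using assms(5) by (cases "even j") simp_all
  have "norm (unit_root (2 * k) ^ (j * t)) = 1"
    by (simp add: unit_root_pow)
  then show ?thesis
    unfolding norm_mult using mult_mono[OF coeff prod] assms(5) by simp
qed

lemma weighted_count_pairs_nonpos:
  fixes k J v m :: nat and g :: real
  assumes kJ: "k = 2 ^ J" and v: "v \<le> J" and g: "0 < g" and G: "G \<subseteq> {..<m}"
    and Y: "\<And>i. i < m \<Longrightarrow> Y i = (if i \<in> G then {y i, y i + 2 ^ v * q i} else {y i})"
    and odd: "\<And>i. i \<in> G \<Longrightarrow> odd (q i)"
    and small: "(2 + g) * cos (pi / (2 * k)) ^ card G \<le> g / (2 * k)"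
  shows "weighted_count k g m Y s \<le> 0"
proof (cases "2 ^ v dvd s + (\<Sum>i<m. y i)")
  case False
  have "2 ^ v dvd k" using kJ v by (simp add: le_imp_power_dvd)
  moreover have "u mod 2 ^ v = y i mod 2 ^ v" if "i < m" "u \<in> Y i" for i u
    using that by (auto simp: Y split: if_splits)
  ultimately have "zero_sum_count (2 * k) m Y t = 0" if "\<not> 2 ^ v dvd t + (\<Sum>i<m. y i)" for t
    using that by (intro zero_sum_count_eq_0[where d = "2 ^ v" and y = y]) auto
  moreover have "\<not> 2 ^ v dvd (s + k) + (\<Sum>i<m. y i)"
    using False dvd_add_right_iff[OF \<open>2 ^ v dvd k\<close>, of "s + (\<Sum>i<m. y i)"] by (simp add: ac_simps)
  ultimately show ?thesis using False by (simp add: weighted_count_def)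
next
  case True
  note t_dvd = pair_term_main[OF kJ v True]
  define c where "c = cos (pi / (2 * k))"
  define T where "T j = Re (complex_of_real (1 - (1 + g) * (-1) ^ j) * unit_root (2 * k) ^ (j * s)
      * (\<Prod>i<m. \<Sum>u\<in>Y i. unit_root (2 * k) ^ (j * u)))" for j
  have k: "0 < k" using kJ by simp
  have "(\<Prod>i<m. \<Sum>u\<in>Y i. unit_root (2 * k) ^ (j * u)) = unit_root (2 * k) ^ (j * (\<Sum>i<m. y i))
      * (\<Prod>i\<in>G. 1 + unit_root (2 * k) ^ (j * (2 ^ v * q i)))" for j
    using odd by (intro prod_pair_sums[OF G Y]) (auto intro: odd_pos)
  then have T: "T j = Re (complex_of_real (1 - (1 + g) * (-1) ^ j)
      * unit_root (2 * k) ^ (j * (s + (\<Sum>i<m. y i)))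
      * (\<Prod>i\<in>G. 1 + unit_root (2 * k) ^ (j * (2 ^ v * q i))))" for j
    by (simp add: T_def distrib_left power_add mult.assoc)
  have bound: "T j \<le> (2 + g) * (2 * c) ^ card G" for j
  proof (cases "2 ^ (J + 1 - v) dvd j")
    case True
    then have "T j = - g * 2 ^ card G"
      unfolding T t_dvd[OF True] by simp
    also have "\<dots> \<le> 0" using g by simp
    also have "0 \<le> (2 + g) * (2 * c) ^ card G"
      using g cos_pi_div_nonneg[OF k] by (simp add: c_def)
    finally show ?thesis .
  next
    case False
    show ?thesis
      unfolding T c_def using pair_term_norm_le[OF kJ v False odd less_imp_le[OF g]]
      by (rule order_trans[OF complex_Re_le_cmod])
  qed
  have T0: "T 0 = - g * 2 ^ card G"
    unfolding T t_dvd[OF dvd_0_right] by simp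
  define B where "B = (2 + g) * (2 * c) ^ card G"
  have "0 \<le> B" using g cos_pi_div_nonneg[OF k] by (simp add: B_def c_def)
  have "2 * k * ((2 + g) * c ^ card G) \<le> g"
    using small k by (simp add: c_def pos_le_divide_eq mult.commute)
  have "(\<Sum>j<2 * k. T j) = (\<Sum>j<Suc (2 * k - 1). T j)" using k by simp
  also have "\<dots> = T 0 + (\<Sum>j<2 * k - 1. T (Suc j))" by (rule sum.lessThan_Suc_shift)
  also have "\<dots> \<le> - g * 2 ^ card G + (2 * k - 1) * B"
    using T0 sum_bounded_above[of "{..<2 * k - 1}" "\<lambda>j. T (Suc j)" B] bound by (simp add: B_def)
  also have "\<dots> \<le> - g * 2 ^ card G + (2 * k) * B"
    using \<open>0 \<le> B\<close> of_nat_mono[of "2 * k - 1" "2 * k"] by (simp add: mult_right_mono)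
  also have "\<dots> = 2 ^ card G * (2 * k * ((2 + g) * c ^ card G) - g)"
    by (simp add: B_def power_mult_distrib algebra_simps)
  also have "\<dots> \<le> 0"
    using \<open>2 * k * ((2 + g) * c ^ card G) \<le> g\<close> by (simp add: mult_nonneg_nonpos)
  finally have "(\<Sum>j<2 * k. T j) \<le> 0" .
  then show ?thesis
    unfolding weighted_count_fourier[OF k] T_def[symmetric] using k by (simp add: divide_nonpos_pos)
qed

lemma weighted_count_split:
  assumes "i < m" "Y i = P \<union> R" "finite P" "finite R" "P \<inter> R = {}"
  shows "weighted_count k g m Y s = weighted_count k g m (Y(i := P)) s + weighted_count k g m (Y(i := R)) s"
proof -
  have Y: "Y(i := P \<union> R) = Y" using assms(2) by (rule fun_upd_idem)
  show ?thesis
    using zero_sum_count_split[OF assms(1,3-5), of "2 * k" Y s]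
      zero_sum_count_split[OF assms(1,3-5), of "2 * k" Y "s + k"]
    unfolding Y weighted_count_def by (simp add: algebra_simps)
qed

lemma weighted_count_empty: "i < m \<Longrightarrow> Y i = {} \<Longrightarrow> weighted_count k g m Y s = 0"
  by (simp add: weighted_count_def zero_sum_count_empty)

lemma weighted_count_le_prod_card:
  "0 \<le> 1 + g \<Longrightarrow> weighted_count k g m Y s \<le> (\<Prod>i<m. card (Y i))"
  unfolding weighted_count_def
  using zero_sum_count_le_prod_card[of "2 * k" m Y s] zero_sum_count_nonneg[of "2 * k" m Y "s + k"]
  by (smt (verit) mult_nonneg_nonneg)

lemma weighted_count_nonpos:
  fixes k J v m :: nat and g :: real
  assumes kJ: "k = 2 ^ J" and v: "v \<le> J" and g: "0 < g" and G: "G \<subseteq> {..<m}"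
    and pairs: "\<And>i. i \<in> G \<Longrightarrow> Y i = {y i, y i + 2 ^ v * q i}"
    and odd: "\<And>i. i \<in> G \<Longrightarrow> odd (q i)"
    and fin: "\<And>i. i < m \<Longrightarrow> finite (Y i)"
    and small: "(2 + g) * cos (pi / (2 * k)) ^ card G \<le> g / (2 * k)"
  shows "weighted_count k g m Y s \<le> 0"
  using pairs fin
proof (induction "\<Sum>i\<in>{..<m} - G. card (Y i)" arbitrary: Y rule: less_induct)
  case less
  show ?case
  proof (cases "\<exists>i<m. i \<notin> G \<and> 2 \<le> card (Y i)")
    case True
    then obtain i where i: "i < m" "i \<notin> G" "2 \<le> card (Y i)" by blast
    then have "Y i \<noteq> {}" by auto
    then obtain a where a: "a \<in> Y i" by blast
    have IH: "weighted_count k g m (Y(i := X)) s \<le> 0" if "X \<subseteq> Y i" "X \<noteq> Y i" for X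
    proof (rule less.hyps)
      have "card X < card (Y i)"
        using that less.prems(2)[OF i(1)] by (intro psubset_card_mono) auto
      show "(\<Sum>l\<in>{..<m} - G. card ((Y(i := X)) l)) < (\<Sum>l\<in>{..<m} - G. card (Y l))"
      proof (rule sum_strict_mono_ex1)
        show "\<forall>l\<in>{..<m} - G. card ((Y(i := X)) l) \<le> card (Y l)"
          using \<open>card X < card (Y i)\<close> by simp
        show "\<exists>l\<in>{..<m} - G. card ((Y(i := X)) l) < card (Y l)"
          using i \<open>card X < card (Y i)\<close> by (intro bexI[of _ i]) simp_all
      qed simp
      show "(Y(i := X)) l = {y l, y l + 2 ^ v * q l}" if "l \<in> G" for l
      proof -
        have "l \<noteq> i" using that i(2) by blast
        then show ?thesis using less.prems(1)[OF that] by simp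
      qed
      show "finite ((Y(i := X)) l)" if "l < m" for l
      proof (cases "l = i")
        case True
        then show ?thesis using \<open>X \<subseteq> Y i\<close> less.prems(2)[OF i(1)] by (simp add: finite_subset)
      qed (simp add: less.prems(2)[OF that])
    qed
    have "\<not> Y i \<subseteq> {a}"
    proof
      assume "Y i \<subseteq> {a}"
      then have "card (Y i) \<le> card {a}" by (rule card_mono[rotated]) simp
      then show False using i(3) by simp
    qed
    then have "{a} \<noteq> Y i" by blast
    moreover have "Y i - {a} \<noteq> Y i" using a by blast
    ultimately have parts: "weighted_count k g m (Y(i := {a})) s \<le> 0"
        "weighted_count k g m (Y(i := Y i - {a})) s \<le> 0"
      using a by (simp_all add: IH)
    have Yi: "Y i = {a} \<union> (Y i - {a})" using a by blast
    have "weighted_count k g m Y s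
        = weighted_count k g m (Y(i := {a})) s + weighted_count k g m (Y(i := Y i - {a})) s"
      by (rule weighted_count_split[where Y = Y, OF i(1) Yi]) (use less.prems(2)[OF i(1)] in simp_all)
    also have "\<dots> \<le> 0" by (rule add_nonpos_nonpos[OF parts])
    finally show ?thesis .
  next
    case no_big: False
    show ?thesis
    proof (cases "\<exists>i<m. Y i = {}")
      case True
      then obtain i where "i < m" "Y i = {}" by blast
      then show ?thesis by (simp add: weighted_count_empty)
    next
      case False
      have one: "card (Y i) = 1" if "i < m" "i \<notin> G" for i
      proof -
        have "card (Y i) < 2" using no_big that by auto
        moreover have "0 < card (Y i)"
          using False that(1) less.prems(2)[OF that(1)] by (auto simp: card_gt_0_iff)
        ultimately show ?thesis by linarith
      qed
      define y' where "y' i = (if i \<in> G then y i else the_elem (Y i))" for i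
      have "Y i = (if i \<in> G then {y' i, y' i + 2 ^ v * q i} else {y' i})" if im: "i < m" for i
      proof (cases "i \<in> G")
        case True
        then show ?thesis using less.prems(1) by (simp add: y'_def)
      next
        case False
        then obtain a where "Y i = {a}" using one[OF im False] by (auto simp: card_Suc_eq)
        then show ?thesis using False by (simp add: y'_def)
      qed
      then show ?thesis by (rule weighted_count_pairs_nonpos[OF kJ v g G _ odd small])
    qed
  qed
qed

lemma card_2_eq_pow2_odd:
  fixes P :: "nat set"
  assumes "card P = 2" "P \<subseteq> {..<2 ^ L}"
  defines "d \<equiv> Max P - Min P"
  shows "multiplicity 2 d < L"
    and "P = {Min P, Min P + 2 ^ multiplicity 2 d * (d div 2 ^ multiplicity 2 d)}"
    and "odd (d div 2 ^ multiplicity 2 d)"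
proof -
  obtain x y where xy: "P = {x, y}" "x \<noteq> y" using assms(1) by (auto simp: card_2_iff)
  obtain a b where ab: "P = {a, b}" "a < b"
  proof (cases "x < y")
    case True
    then show ?thesis using that xy by blast
  next
    case False
    then show ?thesis using that[of y x] xy by (simp add: insert_commute)
  qed
  then have d: "d = b - a" "0 < d" by (simp_all add: d_def)
  have dvd: "2 ^ multiplicity 2 d dvd d" by (rule multiplicity_dvd)
  then show "P = {Min P, Min P + 2 ^ multiplicity 2 d * (d div 2 ^ multiplicity 2 d)}"
    using ab d by simp
  show "odd (d div 2 ^ multiplicity 2 d)"
    using d by (intro multiplicity_decompose) simp_all
  have "2 ^ multiplicity 2 d \<le> d" using dvd d(2) by (rule dvd_imp_le)
  also have "d < 2 ^ L" using ab assms(2) d(1) by auto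
  finally show "multiplicity 2 d < L" by (simp add: power_less_imp_less_exp)
qed

definition pair_weight :: "nat \<Rightarrow> nat \<Rightarrow> real" where
  "pair_weight k a = real (a div 2) * (2 / k) + real (a mod 2)"

lemma pair_weight_nonneg: "0 \<le> pair_weight k a"
  by (simp add: pair_weight_def)

lemma pair_weight_add_2: "pair_weight k (a + 2) = pair_weight k 2 + pair_weight k a"
  by (simp add: pair_weight_def algebra_simps)

lemma pair_weight_le_2:
  assumes "a \<le> k"
  shows "pair_weight k a \<le> 2"
proof -
  have "real (a div 2) * 2 \<le> real k" using assms by linarith
  then have "real (a div 2) * (2 / k) \<le> 1" by (cases "k = 0") (simp_all add: field_simps)
  moreover have "real (a mod 2) \<le> 1" by simp
  ultimately show ?thesis by (simp add: pair_weight_def)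
qed

lemma prod_pair_weight_upd:
  fixes m :: nat
  assumes "i < m"
  shows "(\<Prod>l<m. pair_weight k (card ((Y(i := X)) l)))
    = pair_weight k (card X) * (\<Prod>l\<in>{..<m} - {i}. pair_weight k (card (Y l)))"
  using assms by (simp add: prod.remove)

lemma weighted_count_nonpos_of_many_pairs:
  fixes k J M m :: nat and g :: real
  assumes kJ: "k = 2 ^ J" and g: "0 < g"
    and small: "(2 + g) * cos (pi / (2 * k)) ^ M \<le> g / (2 * k)"
    and Y: "\<And>i. i < m \<Longrightarrow> Y i \<subseteq> {..<2 * k}"
    and many: "(J + 1) * M \<le> card {i. i < m \<and> card (Y i) = 2}"
  shows "weighted_count k g m Y s \<le> 0"
proof -
  define Q where "Q = {i. i < m \<and> card (Y i) = 2}"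
  define d where "d i = Max (Y i) - Min (Y i)" for i
  define val where "val i = multiplicity 2 (d i)" for i
  have "Y i \<subseteq> {..<2 ^ (J + 1)}" if "i < m" for i using Y[OF that] kJ by simp
  then have pair: "val i < J + 1" "Y i = {Min (Y i), Min (Y i) + 2 ^ val i * (d i div 2 ^ val i)}"
      "odd (d i div 2 ^ val i)" if "i \<in> Q" for i
    using card_2_eq_pow2_odd[of "Y i" "J + 1"] that by (simp_all add: Q_def val_def d_def)
  have "val \<in> Q \<rightarrow> {..J}" using pair(1) by (simp add: Pi_iff less_Suc_eq_le)
  then obtain v where v: "v \<in> {..J}" "card Q \<le> card (val -` {v} \<inter> Q) * card {..J}"
    using pigeonhole_card[of val Q "{..J}"] by (auto simp: Q_def)
  define G where "G = val -` {v} \<inter> Q"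
  have "(J + 1) * M \<le> (J + 1) * card G"
    using le_trans[OF many[folded Q_def] v(2)] by (simp add: G_def mult.commute)
  then have "M \<le> card G" by (rule mult_le_cancel1[THEN iffD1, THEN mp]) simp
  have c: "0 \<le> cos (pi / (2 * k))" "cos (pi / (2 * k)) \<le> 1"
    using cos_pi_div_nonneg[of k] kJ by simp_all
  show ?thesis
  proof (rule weighted_count_nonpos[OF kJ _ g])
    show "v \<le> J" using v(1) by simp
    show "G \<subseteq> {..<m}" by (auto simp: G_def Q_def)
    show "Y i = {Min (Y i), Min (Y i) + 2 ^ v * (d i div 2 ^ v)}" "odd (d i div 2 ^ v)"
      if "i \<in> G" for i
      using pair[of i] that by (simp_all add: G_def)
    show "finite (Y i)" if "i < m" for i using Y[OF that] by (rule finite_subset) simp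
    have "cos (pi / (2 * k)) ^ card G \<le> cos (pi / (2 * k)) ^ M"
      by (rule power_decreasing[OF \<open>M \<le> card G\<close> c])
    then show "(2 + g) * cos (pi / (2 * k)) ^ card G \<le> g / (2 * k)"
      using small g by (smt (verit) mult_left_mono)
  qed
qed

lemma prod_lessThan_indicator_pow:
  fixes m :: nat
  assumes "G \<subseteq> {..<m}"
  shows "(\<Prod>i<m. if i \<in> G then a else 1) = a ^ card G"
proof -
  have "(\<Prod>i<m. if i \<in> G then a else 1) = (\<Prod>i\<in>G. a)"
    by (rule prod.mono_neutral_cong_right[OF finite_lessThan[of m] assms]) auto
  then show ?thesis by simp
qed

lemma weighted_count_le_pair_weight_of_card_le_2:
  fixes k J M m :: nat and g :: real
  assumes kJ: "k = 2 ^ J" and g: "0 < g"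
    and small: "(2 + g) * cos (pi / (2 * k)) ^ M \<le> g / (2 * k)"
    and Y: "\<And>i. i < m \<Longrightarrow> Y i \<subseteq> {..<2 * k}"
    and two: "\<And>i. i < m \<Longrightarrow> card (Y i) \<le> 2"
  shows "weighted_count k g m Y s \<le> real k ^ ((J + 1) * M) * (\<Prod>i<m. pair_weight k (card (Y i)))"
proof (cases "\<exists>i<m. Y i = {}")
  case True
  then obtain i where "i < m" "Y i = {}" by blast
  then have "weighted_count k g m Y s = 0" by (rule weighted_count_empty)
  then show ?thesis by (simp add: prod_nonneg pair_weight_nonneg)
next
  case False
  define Q where "Q = {i. i < m \<and> card (Y i) = 2}"
  have Q: "Q \<subseteq> {..<m}" by (auto simp: Q_def)
  have card: "card (Y i) = (if i \<in> Q then 2 else 1)" if "i < m" for i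
  proof -
    have "finite (Y i)" using Y[OF that] by (rule finite_subset) simp
    then have "0 < card (Y i)" using False that by (auto simp: card_gt_0_iff)
    then show ?thesis using two[OF that] that by (auto simp: Q_def)
  qed
  have "(\<Prod>i<m. pair_weight k (card (Y i))) = (\<Prod>i<m. if i \<in> Q then 2 / k else 1)"
    by (rule prod.cong) (simp_all add: card pair_weight_def)
  then have weight: "(\<Prod>i<m. pair_weight k (card (Y i))) = (2 / k) ^ card Q"
    by (simp add: prod_lessThan_indicator_pow[OF Q])
  show ?thesis
  proof (cases "(J + 1) * M \<le> card Q")
    case True
    have "weighted_count k g m Y s \<le> 0"
      using weighted_count_nonpos_of_many_pairs[OF kJ g small Y True[unfolded Q_def]] .
    moreover have "0 \<le> real k ^ ((J + 1) * M) * (\<Prod>i<m. pair_weight k (card (Y i)))"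
      by (simp add: prod_nonneg pair_weight_nonneg)
    ultimately show ?thesis by linarith
  next
    case False
    have "(\<Prod>i<m. card (Y i)) = (\<Prod>i<m. if i \<in> Q then 2 else 1)"
      by (rule prod.cong) (simp_all add: card)
    then have "weighted_count k g m Y s \<le> 2 ^ card Q"
      using weighted_count_le_prod_card[of g k m Y s] g by (simp add: prod_lessThan_indicator_pow[OF Q])
    also have "\<dots> \<le> 2 ^ card Q * real k ^ ((J + 1) * M - card Q)"
      using kJ by simp
    also have "\<dots> = real k ^ ((J + 1) * M) * (2 / k) ^ card Q"
      using False kJ by (simp add: power_divide field_simps flip: power_add)
    finally show ?thesis by (simp add: weight)
  qed
qed

lemma sum_card_fun_upd_less:
  assumes "finite A" "i \<in> A" "card X < card (Y i)"
  shows "(\<Sum>l\<in>A. card ((Y(i := X)) l)) < (\<Sum>l\<in>A. card (Y l))"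
proof (rule sum_strict_mono_ex1[OF assms(1)])
  show "\<forall>l\<in>A. card ((Y(i := X)) l) \<le> card (Y l)" using assms(3) by simp
  show "\<exists>l\<in>A. card ((Y(i := X)) l) < card (Y l)" using assms(2,3) by (intro bexI[of _ i]) simp_all
qed

lemma weighted_count_le_pair_weight:
  fixes k J M m :: nat and g :: real
  assumes kJ: "k = 2 ^ J" and g: "0 < g"
    and small: "(2 + g) * cos (pi / (2 * k)) ^ M \<le> g / (2 * k)"
    and Y: "\<And>i. i < m \<Longrightarrow> Y i \<subseteq> {..<2 * k}"
  shows "weighted_count k g m Y s \<le> real k ^ ((J + 1) * M) * (\<Prod>i<m. pair_weight k (card (Y i)))"
  using Y
proof (induction "\<Sum>i<m. card (Y i)" arbitrary: Y rule: less_induct)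
  case less
  show ?case
  proof (cases "\<exists>i<m. 3 \<le> card (Y i)")
    case False
    then have "card (Y i) \<le> 2" if "i < m" for i using that not_less_eq_eq by force
    then show ?thesis
      using less.prems by (intro weighted_count_le_pair_weight_of_card_le_2[OF kJ g small]) auto
  next
    case True
    then obtain i where i: "i < m" "3 \<le> card (Y i)" by blast
    have fin: "finite (Y i)" using less.prems[OF i(1)] by (rule finite_subset) simp
    obtain P where P: "P \<subseteq> Y i" "card P = 2"
      using obtain_subset_with_card_n[of 2 "Y i"] i(2) by auto
    define R where "R = Y i - P"
    have R: "card R + 2 = card (Y i)" "finite P" "finite R"
      using P fin i(2) by (simp_all add: R_def card_Diff_subset finite_subset)
    define B where "B X = real k ^ ((J + 1) * M) * (\<Prod>l<m. pair_weight k (card ((Y(i := X)) l)))" for X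
    have IH: "weighted_count k g m (Y(i := X)) s \<le> B X" if "X \<subseteq> Y i" "card X < card (Y i)" for X
      unfolding B_def
    proof (rule less.hyps)
      show "(\<Sum>l<m. card ((Y(i := X)) l)) < (\<Sum>l<m. card (Y l))"
        using i(1) that(2) by (intro sum_card_fun_upd_less) simp_all
      show "(Y(i := X)) l \<subseteq> {..<2 * k}" if "l < m" for l
        using less.prems[OF that] less.prems[OF i(1)] \<open>X \<subseteq> Y i\<close> by auto
    qed
    have "weighted_count k g m Y s
        = weighted_count k g m (Y(i := P)) s + weighted_count k g m (Y(i := R)) s"
      by (rule weighted_count_split[where Y = Y, OF i(1) _ R(2,3)]) (use P in \<open>auto simp: R_def\<close>)
    also have "\<dots> \<le> B P + B R"
    proof (intro add_mono IH)
      show "card P < card (Y i)" "card R < card (Y i)" using P(2) R(1) i(2) by linarith+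
    qed (use P(1) in \<open>simp_all add: R_def\<close>)
    also have "\<dots> = B (Y i)"
    proof -
      have "pair_weight k (card (Y i)) = pair_weight k (card P) + pair_weight k (card R)"
        using R(1) P(2) pair_weight_add_2[of k "card R"] by simp
      then show ?thesis unfolding B_def prod_pair_weight_upd[OF i(1)] by (simp add: algebra_simps)
    qed
    finally show ?thesis by (simp add: B_def)
  qed
qed

definition score :: "real \<Rightarrow> nat \<Rightarrow> nat \<Rightarrow> ptree \<Rightarrow> (nat \<Rightarrow> nat) \<Rightarrow> real" where
  "score g n k T x =
     (if clicks n T x then if ghzP n k (\<lambda>i. run T x i = Some True) x = 0 then - (1 + g) else 1 else 0)"

definition valid_in :: "nat \<Rightarrow> nat \<Rightarrow> (nat \<Rightarrow> nat set) \<Rightarrow> (nat \<Rightarrow> nat) set" where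
  "valid_in n k S = {x \<in> rect n S. (\<Sum>i<n. x i) mod k = 0}"

lemma validD_eq_valid_in: "validD n k = valid_in n k (\<lambda>_. {..<k})"
  by (simp add: validD_def valid_in_def inputs_eq_rect)

lemma finite_valid_in: "(\<And>i. i < n \<Longrightarrow> finite (S i)) \<Longrightarrow> finite (valid_in n k S)"
  unfolding valid_in_def by (simp add: finite_rect)

lemma real_le_pow2_ceiling_log:
  assumes "1 \<le> t"
  shows "real t \<le> 2 ^ nat \<lceil>log 2 (real t)\<rceil>"
proof -
  have "real t = 2 powr (log 2 (real t))" using assms by simp
  also have "\<dots> \<le> 2 powr \<lceil>log 2 (real t)\<rceil>" by (intro powr_mono) auto
  also have "\<dots> = 2 ^ nat \<lceil>log 2 (real t)\<rceil>"
    using assms by (simp add: powr_realpow[symmetric])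
  finally show ?thesis .
qed

lemma sum_score_Node:
  assumes "p < n" "\<And>v. v \<in> S p \<Longrightarrow> f v < length ts" "\<And>i. i < n \<Longrightarrow> finite (S i)"
  shows "(\<Sum>x\<in>valid_in n k S. score g n k (Node p f ts) x)
    = (\<Sum>c<length ts. \<Sum>x\<in>valid_in n k (S(p := {v \<in> S p. f v = c})). score g n k (ts ! c) x)"
proof -
  define S' where "S' c = S(p := {v \<in> S p. f v = c})" for c
  have part: "valid_in n k S = (\<Union>c<length ts. valid_in n k (S' c))"
    using assms(1,2) by (auto simp: valid_in_def rect_def S'_def)
  have fin: "finite (valid_in n k (S' c))" for c
    using assms(3) by (intro finite_valid_in) (simp add: S'_def)
  have disj: "valid_in n k (S' c) \<inter> valid_in n k (S' c') = {}" if "c \<noteq> c'" for c c'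
    using assms(1) that by (auto simp: valid_in_def rect_def S'_def)
  have run: "score g n k (Node p f ts) x = score g n k (ts ! c) x" if "x \<in> valid_in n k (S' c)" for c x
  proof -
    have "x p \<in> S p" "f (x p) = c" using that assms(1) by (auto simp: valid_in_def rect_def S'_def)
    then have "run (Node p f ts) x = run (ts ! c) x" using assms(2) by auto
    then show ?thesis unfolding score_def clicks_def by (simp only:)
  qed
  show ?thesis
    unfolding part S'_def[symmetric] using fin disj
    by (simp add: sum.UNION_disjoint run)
qed

lemma sum_score_le_tree:
  fixes K :: real
  assumes leaf: "\<And>lam S. (\<And>i. i < n \<Longrightarrow> S i \<subseteq> {..<k}) \<Longrightarrow>
      (\<Sum>x\<in>valid_in n k S. score g n k (Leaf lam) x) \<le> K"
    and "0 \<le> K"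
  shows "wf_tree n k T \<Longrightarrow> (\<And>i. i < n \<Longrightarrow> S i \<subseteq> {..<k}) \<Longrightarrow>
    (\<Sum>x\<in>valid_in n k S. score g n k T x) \<le> 2 ^ bits T * K"
proof (induction T arbitrary: S)
  case (Leaf lam)
  then show ?case using leaf[of S lam] by simp
next
  case (Node p f ts)
  define b where "b = Max (set (0 # map bits ts))"
  have wf: "p < n" "ts \<noteq> []" "\<And>v. v < k \<Longrightarrow> f v < length ts" "\<And>c. c < length ts \<Longrightarrow> wf_tree n k (ts ! c)"
    using Node.prems(1) by (auto simp: list_all_length)
  have S: "S i \<subseteq> {..<k}" "finite (S i)" if "i < n" for i
    using Node.prems(2)[OF that] by (auto intro: finite_subset)
  have "(\<Sum>x\<in>valid_in n k S. score g n k (Node p f ts) x)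
      = (\<Sum>c<length ts. \<Sum>x\<in>valid_in n k (S(p := {v \<in> S p. f v = c})). score g n k (ts ! c) x)"
    using S(1)[OF wf(1)] by (intro sum_score_Node wf(1) S(2)) (auto intro: wf(3))
  also have "\<dots> \<le> (\<Sum>c<length ts. 2 ^ b * K)"
  proof (rule sum_mono)
    fix c assume c: "c \<in> {..<length ts}"
    have "(\<Sum>x\<in>valid_in n k (S(p := {v \<in> S p. f v = c})). score g n k (ts ! c) x) \<le> 2 ^ bits (ts ! c) * K"
      using c S(1) by (intro Node.IH wf(4)) auto
    also have "\<dots> \<le> 2 ^ b * K"
      using c \<open>0 \<le> K\<close> by (intro mult_right_mono power_increasing) (auto simp: b_def)
    finally show "(\<Sum>x\<in>valid_in n k (S(p := {v \<in> S p. f v = c})). score g n k (ts ! c) x) \<le> 2 ^ b * K" .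
  qed
  also have "\<dots> = real (length ts) * (2 ^ b * K)" by simp
  also have "\<dots> \<le> 2 ^ nat \<lceil>log 2 (real (length ts))\<rceil> * (2 ^ b * K)"
    using wf(2) \<open>0 \<le> K\<close> by (intro mult_right_mono real_le_pow2_ceiling_log) (auto simp: Suc_le_eq)
  also have "\<dots> = 2 ^ bits (Node p f ts) * K" by (simp add: b_def power_add)
  finally show ?case .
qed

lemma double_dvd_add_mult_iff:
  fixes k t b :: nat
  assumes "0 < k"
  shows "2 * k dvd t + k * b \<longleftrightarrow> k dvd t \<and> even (t div k + b)"
proof (cases "k dvd t")
  case True
  then obtain q where t: "t = k * q" by blast
  have "2 * k dvd t + k * b \<longleftrightarrow> k * 2 dvd k * (q + b)"
    by (simp add: t distrib_left mult.commute)
  also have "\<dots> \<longleftrightarrow> even (q + b)" using assms by (rule dvd_times_left_cancel_iff[OF gr_implies_not0])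
  finally show ?thesis using True assms by (simp add: t)
next
  case False
  then have "\<not> k dvd t + k * b" by (simp add: dvd_add_left_iff)
  then have "\<not> 2 * k dvd t + k * b" using dvd_trans[OF dvd_triv_right[of k 2]] by blast
  then show ?thesis using False by simp
qed

lemma mod_double_div: "0 < k \<Longrightarrow> (t mod (2 * k)) div k = (t div k) mod 2"
  for k t :: nat
  by (simp add: mod_mult2_eq mult.commute[of 2 k])

lemma indicator_score_eq:
  fixes k t b :: nat and g :: real
  assumes "0 < k"
  shows "(if k dvd t then if even (t div k + b) then 1 else - (1 + g) else 0)
    = (if 2 * k dvd t + k * b then 1 else 0) - (1 + g) * (if 2 * k dvd t + k * (b + 1) then 1 else 0)"
  using double_dvd_add_mult_iff[OF assms, of t b] double_dvd_add_mult_iff[OF assms, of t "b + 1"]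
  by auto

lemma sum_score_Leaf:
  fixes lam :: "nat \<Rightarrow> nat \<Rightarrow> bool option"
  assumes k: "0 < k" and S: "\<And>i. i < n \<Longrightarrow> S i \<subseteq> {..<k}"
  defines "enc i v \<equiv> v + (if lam i v = Some True then k else 0)"
  shows "(\<Sum>x\<in>valid_in n k S. score g n k (Leaf lam) x)
    = weighted_count k g n (\<lambda>i. enc i ` {v \<in> S i. lam i v \<noteq> None}) 0"
proof -
  define A where "A i = {v \<in> S i. lam i v \<noteq> None}" for i
  define h where "h x = (if k dvd (\<Sum>i<n. x i) then score g n k (Leaf lam) x else 0)" for x
  have finS: "finite (rect n S)" using S by (intro finite_rect) (auto intro: finite_subset)
  have inj: "inj_on (enc i) (A i)" if "i < n" for i
  proof (rule inj_onI)
    fix u v assume "u \<in> A i" "v \<in> A i" "enc i u = enc i v"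
    then have "enc i u mod k = enc i v mod k" "u < k" "v < k" using S[OF that] by (auto simp: A_def)
    then show "u = v" by (simp add: enc_def split: if_splits)
  qed
  have "(\<Sum>x\<in>valid_in n k S. score g n k (Leaf lam) x) = (\<Sum>x\<in>rect n S. h x)"
    unfolding valid_in_def h_def using finS by (simp add: sum.inter_filter dvd_eq_mod_eq_0)
  also have "\<dots> = (\<Sum>x\<in>rect n A. h x)"
    using finS by (intro sum.mono_neutral_right) (auto simp: rect_def A_def h_def score_def clicks_def)
  also have "\<dots> = (\<Sum>x\<in>rect n A. (if 2 * k dvd 0 + (\<Sum>i<n. enc i (x i)) then 1 else 0)
      - (1 + g) * (if 2 * k dvd k + (\<Sum>i<n. enc i (x i)) then 1 else 0))"
  proof (rule sum.cong[OF refl])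
    fix x assume x: "x \<in> rect n A"
    define b where "b = card {i. i < n \<and> lam i (x i) = Some True}"
    have "(\<Sum>i<n. enc i (x i)) = (\<Sum>i<n. x i) + k * b"
      by (simp add: enc_def b_def sum.distrib sum.If_cases Int_def conj_commute)
    moreover have "h x = (if k dvd (\<Sum>i<n. x i) then if even ((\<Sum>i<n. x i) div k + b) then 1 else - (1 + g) else 0)"
      using x k by (auto simp: h_def score_def clicks_def rect_def A_def ghzP_def ghzF_def b_def mod_double_div
          even_add odd_iff_mod_2_eq_one split: if_splits)
    ultimately show "h x = (if 2 * k dvd 0 + (\<Sum>i<n. enc i (x i)) then 1 else 0)
      - (1 + g) * (if 2 * k dvd k + (\<Sum>i<n. enc i (x i)) then 1 else 0)"
      using indicator_score_eq[OF k, of "\<Sum>i<n. x i" b g] by (simp add: algebra_simps)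
  qed
  also have "\<dots> = weighted_count k g n (\<lambda>i. enc i ` A i) 0"
    by (simp add: weighted_count_def zero_sum_count_image_rect inj sum_subtractf sum_distrib_left)
  finally show ?thesis by (simp add: A_def)
qed

lemma zero_sum_count_lessThan:
  assumes "0 < N"
  shows "zero_sum_count N (Suc m) (\<lambda>_. {..<N}) s = real N ^ m"
proof -
  define \<omega> where "\<omega> = unit_root N"
  have "(\<Sum>y<N. \<omega> ^ (j * y)) = (if j = 0 then of_nat N else 0)" if "j < N" for j
  proof -
    have "N dvd j \<longleftrightarrow> j = 0" using that by (auto dest: nat_dvd_not_less)
    then show ?thesis using sum_unit_root_pow[OF assms, of j] by (simp add: \<omega>_def mult.commute)
  qed
  then have "(\<Sum>j<N. \<omega> ^ (j * s) * (\<Prod>i<Suc m. \<Sum>y<N. \<omega> ^ (j * y)))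
      = (\<Sum>j<N. if j = 0 then of_nat N ^ Suc m else 0)"
    by (intro sum.cong) auto
  also have "\<dots> = of_nat N ^ Suc m" using assms by simp
  finally have sums: "(\<Sum>j<N. \<omega> ^ (j * s) * (\<Prod>i<Suc m. \<Sum>y<N. \<omega> ^ (j * y))) = of_nat N ^ Suc m" .
  have "complex_of_real (zero_sum_count N (Suc m) (\<lambda>_. {..<N}) s)
      = (\<Sum>j<N. \<omega> ^ (j * s) * (\<Prod>i<Suc m. \<Sum>y<N. \<omega> ^ (j * y))) / of_nat N"
    unfolding \<omega>_def by (rule zero_sum_count_fourier[OF assms])
  also have "\<dots> = complex_of_real (real N ^ m)"
    unfolding sums using assms by simp
  finally show ?thesis by (rule of_real_eq_iff[THEN iffD1])
qed

lemma card_validD: "0 < k \<Longrightarrow> 0 < n \<Longrightarrow> card (validD n k) = k ^ (n - 1)"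
proof -
  assume "0 < k" "0 < n"
  have "real (card (validD n k)) = (\<Sum>x\<in>validD n k. 1)" by simp
  also have "\<dots> = (\<Sum>x\<in>rect n (\<lambda>_. {..<k}). if k dvd 0 + (\<Sum>i<n. x i) then 1 else 0)"
    unfolding validD_eq_valid_in valid_in_def
    by (subst sum.inter_filter) (simp_all add: finite_rect dvd_eq_mod_eq_0)
  also have "\<dots> = zero_sum_count k n (\<lambda>i. (\<lambda>v. v) ` {..<k}) 0"
    by (rule zero_sum_count_image_rect[symmetric]) simp
  also have "\<dots> = k ^ (n - 1)"
    using zero_sum_count_lessThan[OF \<open>0 < k\<close>, of "n - 1" 0] \<open>0 < n\<close> by simp
  finally show ?thesis by (simp only: of_nat_eq_iff flip: of_nat_power)
qed

lemma score_eq_indicator: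
  "score g n k T x = indicator {T. clicks n T x} T
    - (2 + g) * indicator {T. clicks n T x \<and> ghzP n k (\<lambda>i. run T x i = Some True) x = 0} T"
  by (simp add: score_def indicator_def)

lemma sum_prob_clicks_le:
  fixes M :: "ptree pmf"
  assumes "finite D" and bound: "\<And>T. T \<in> set_pmf M \<Longrightarrow> (\<Sum>x\<in>D. score g n k T x) \<le> B"
  shows "(\<Sum>x\<in>D. measure_pmf.prob M {T. clicks n T x})
    - (2 + g) * (\<Sum>x\<in>D. measure_pmf.prob M {T. clicks n T x \<and> ghzP n k (\<lambda>i. run T x i = Some True) x = 0})
    \<le> B"
proof -
  have int: "integrable (measure_pmf M) (indicator A :: ptree \<Rightarrow> real)" for A
    by (rule measure_pmf.integrable_const_bound[where B = 1]) (auto simp: indicator_def)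
  then have int_score: "integrable (measure_pmf M) (\<lambda>T. score g n k T x)" for x
    unfolding score_eq_indicator by auto
  have "(\<Sum>x\<in>D. measure_pmf.prob M {T. clicks n T x})
      - (2 + g) * (\<Sum>x\<in>D. measure_pmf.prob M {T. clicks n T x \<and> ghzP n k (\<lambda>i. run T x i = Some True) x = 0})
      = (\<Sum>x\<in>D. measure_pmf.expectation M (\<lambda>T. score g n k T x))"
    unfolding score_eq_indicator using int
    by (simp add: sum_subtractf sum_distrib_left)
  also have "\<dots> = measure_pmf.expectation M (\<lambda>T. \<Sum>x\<in>D. score g n k T x)"
    by (rule Bochner_Integration.integral_sum[symmetric]) (rule int_score)
  also have "\<dots> \<le> B"
    using int_score bound by (intro measure_pmf.integral_le_const AE_pmfI) auto
  finally show ?thesis .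
qed

lemma sum_score_le:
  fixes k J n c :: nat
  assumes kJ: "k = 2 ^ J" and "wf_tree n k T" and "bits T \<le> c"
  shows "(\<Sum>x\<in>validD n k. score (1 / k) n k T x) \<le> 2 ^ c * (real k ^ ((J + 1) * (16 * k ^ 4)) * 2 ^ n)"
proof -
  define K where "K = real k ^ ((J + 1) * (16 * k ^ 4)) * 2 ^ n"
  have k: "0 < k" using kJ by simp
  have leaf: "(\<Sum>x\<in>valid_in n k S. score (1 / k) n k (Leaf lam) x) \<le> K"
    if S: "\<And>i. i < n \<Longrightarrow> S i \<subseteq> {..<k}" for lam S
  proof -
    define Y where "Y i = (\<lambda>v. v + (if lam i v = Some True then k else 0)) ` {v \<in> S i. lam i v \<noteq> None}"
      for i
    have Y: "Y i \<subseteq> {..<2 * k}" "card (Y i) \<le> k" if "i < n" for i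
    proof -
      show "Y i \<subseteq> {..<2 * k}" using S[OF that] by (auto simp: Y_def)
      have "card (Y i) \<le> card {v \<in> S i. lam i v \<noteq> None}" unfolding Y_def by (rule card_image_le) 
        (use S[OF that] in \<open>auto intro: finite_subset\<close>)
      also have "\<dots> \<le> card {..<k}" using S[OF that] by (intro card_mono) auto
      finally show "card (Y i) \<le> k" by simp
    qed
    have "(\<Sum>x\<in>valid_in n k S. score (1 / k) n k (Leaf lam) x) = weighted_count k (1 / k) n Y 0"
      unfolding Y_def by (rule sum_score_Leaf[OF k S])
    also have "\<dots> \<le> real k ^ ((J + 1) * (16 * k ^ 4)) * (\<Prod>i<n. pair_weight k (card (Y i)))"
      using k cos_pi_div_pow_small[OF kJ] Y(1)
      by (intro weighted_count_le_pair_weight[OF kJ]) (simp_all add: field_simps)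
    also have "\<dots> \<le> K"
      unfolding K_def using Y(2) pair_weight_le_2
      by (intro mult_left_mono) (auto intro: prod_le_power pair_weight_nonneg)
    finally show ?thesis .
  qed
  have "(\<Sum>x\<in>valid_in n k (\<lambda>_. {..<k}). score (1 / k) n k T x) \<le> 2 ^ bits T * K"
    using leaf assms(2) by (intro sum_score_le_tree) (simp_all add: K_def)
  also have "\<dots> \<le> 2 ^ c * K"
    using assms(3) by (intro mult_right_mono) (simp_all add: K_def)
  finally show ?thesis by (simp add: validD_eq_valid_in K_def)
qed

lemma root_mult_root_le:
  fixes C F B a r d :: real and n c :: nat
  assumes n: "0 < n" and d: "0 < d" and C: "0 \<le> C" and r: "0 \<le> r"
    and CF: "C - a * F \<le> 2 ^ c * B" and B: "B / d \<le> r ^ n"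
  shows "1 / 2 powr (c / n) * root n (C / d) * root n (1 - F / (C / d) / d * a) \<le> r"
proof -
  define E where "E = C / d"
  define X where "X = 1 - F / E / d * a"
  define L where "L = 1 / 2 powr (c / n) * root n E * root n X"
  have "0 \<le> E" using C d by (simp add: E_def)
  show ?thesis
  proof (cases "E = 0 \<or> X \<le> 0")
    case True
    then have "root n E * root n X \<le> 0"
      using \<open>0 \<le> E\<close> n by (auto intro: mult_nonneg_nonpos)
    then have "L \<le> 0" by (simp add: L_def divide_nonpos_pos)
    then show ?thesis using r by (simp add: L_def E_def X_def)
  next
    case False
    then have "0 < E" "0 < X" using \<open>0 \<le> E\<close> by auto
    have "(2 powr (c / n)) ^ n = (2 powr (c / n)) powr n" by (simp add: powr_realpow)
    also have "\<dots> = 2 ^ c" using n by (simp add: powr_powr powr_realpow)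
    finally have "(2 powr (c / n)) ^ n = 2 ^ c" .
    then have "L ^ n = E * X / 2 ^ c"
      using n \<open>0 < E\<close> \<open>0 < X\<close> by (simp add: L_def power_mult_distrib power_divide)
    also have "E * X = (C - a * F) / d"
      using \<open>0 < E\<close> d by (simp add: X_def E_def field_simps)
    also have "(C - a * F) / d / 2 ^ c \<le> 2 ^ c * B / d / 2 ^ c"
      using CF d by (intro divide_right_mono) simp_all
    also have "\<dots> = B / d" by simp
    also have "\<dots> \<le> r ^ n" by (rule B)
    finally have "L ^ Suc (n - 1) \<le> r ^ Suc (n - 1)" using n by simp
    then have "L \<le> r" using r by (rule power_le_imp_le_base)
    then show ?thesis by (simp add: L_def E_def X_def)
  qed
qed

lemma pow4_ge_poly: "5 \<le> J \<Longrightarrow> 17 * J * (J + 1) \<le> 4 ^ J"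
proof (induction J rule: dec_induct)
  case (step J)
  have "Suc J + 1 \<le> 4 * J" using step(1) by simp
  then have "17 * Suc J * (Suc J + 1) \<le> 17 * Suc J * (4 * J)" by (rule mult_le_mono2)
  also have "\<dots> = 4 * (17 * J * (J + 1))" by (simp add: algebra_simps)
  finally show ?case using step(3) by simp
qed simp

lemma exponent_bound:
  assumes "5 \<le> J"
  shows "J * ((J + 1) * (16 * (2 ^ J) ^ 4) + 1) \<le> ((2::nat) ^ J) ^ 6"
proof -
  define X :: nat where "X = 2 ^ (4 * J)"
  define Q where "Q = J * (J + 1) * X"
  have "J * 1 * 1 \<le> Q" unfolding Q_def X_def by (intro mult_le_mono) simp_all
  have "J * ((J + 1) * (16 * (2 ^ J) ^ 4) + 1) = 16 * Q + J"
    by (simp add: Q_def X_def algebra_simps flip: power_mult)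
  also have "\<dots> \<le> 17 * Q" using \<open>J * 1 * 1 \<le> Q\<close> by simp
  also have "\<dots> = (17 * J * (J + 1)) * X" by (simp add: Q_def mult.assoc)
  also have "\<dots> \<le> 4 ^ J * X" using pow4_ge_poly[OF assms] by (rule mult_le_mono1)
  also have "\<dots> = 2 ^ (2 * J) * 2 ^ (4 * J)" by (simp add: X_def power_mult)
  also have "\<dots> = 2 ^ (J * 6)"
    unfolding power_add[symmetric] by (rule arg_cong[where f = "(^) 2"]) simp
  finally show ?thesis by (simp only: power_mult)
qed

lemma classical_bound:
  fixes n k c J :: nat and M :: "ptree pmf"
  assumes kJ: "k = 2 ^ J" and J: "5 \<le> J" and n: "n = k ^ 6" and M: "valid_model n k c M"
  shows "1 / 2 powr (c / n) * eta n k M * root n (1 - eps n k M * (2 + 1 / k)) \<le> 4 / k"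
proof -
  define D where "D = validD n k"
  define d where "d = real (card D)"
  define K where "K = real k ^ ((J + 1) * (16 * k ^ 4)) * 2 ^ n"
  define C where "C = (\<Sum>x\<in>D. measure_pmf.prob M {T. clicks n T x})"
  define F where "F = (\<Sum>x\<in>D. measure_pmf.prob M
      {T. clicks n T x \<and> ghzP n k (\<lambda>i. run T x i = Some True) x = 0})"
  have k: "0 < k" and "0 < n" using kJ n by simp_all
  have d: "d = real k ^ (n - 1)" using card_validD[OF k \<open>0 < n\<close>] by (simp add: d_def D_def)
  have "finite D" unfolding D_def validD_eq_valid_in by (simp add: finite_valid_in)
  then have CF: "C - (2 + 1 / k) * F \<le> 2 ^ c * K"
    unfolding C_def F_def K_def D_def
    using M by (intro sum_prob_clicks_le sum_score_le[OF kJ]) (auto simp: valid_model_def)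
  have eta: "eta n k M = root n (C / d)" by (simp add: eta_def C_def d_def D_def)
  have "eta n k M ^ n = C / d"
    unfolding eta using \<open>0 < n\<close> by (simp add: C_def d_def sum_nonneg)
  then have eps: "eps n k M = F / (C / d) / d"
    by (simp add: eps_def F_def d_def D_def sum_divide_distrib)
  have "K * k \<le> 4 ^ n"
  proof -
    have "k ^ ((J + 1) * (16 * k ^ 4) + 1) = (2::nat) ^ (J * ((J + 1) * (16 * k ^ 4) + 1))"
      by (simp only: kJ power_mult)
    also have "\<dots> \<le> 2 ^ n" using exponent_bound[OF J] by (intro power_increasing) (simp_all add: n kJ)
    finally have "k ^ ((J + 1) * (16 * k ^ 4) + 1) \<le> (2::nat) ^ n" .
    then have "real k ^ ((J + 1) * (16 * k ^ 4) + 1) \<le> 2 ^ n"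
      by (metis of_nat_le_iff of_nat_numeral of_nat_power)
    then have "real k ^ ((J + 1) * (16 * k ^ 4) + 1) * 2 ^ n \<le> 2 ^ n * 2 ^ n"
      by (rule mult_right_mono) simp
    then show ?thesis by (simp add: K_def mult_ac flip: power_mult_distrib)
  qed
  have "real k ^ n = real k * real k ^ (n - 1)" using \<open>0 < n\<close> by (cases n) simp_all
  then have "K / d = K * k / real k ^ n" using k by (simp add: d)
  also have "\<dots> \<le> 4 ^ n / real k ^ n" using \<open>K * k \<le> 4 ^ n\<close> by (rule divide_right_mono) simp
  also have "\<dots> = (4 / k) ^ n" by (simp add: power_divide)
  finally have "K / d \<le> (4 / k) ^ n" .
  then show ?thesis
    unfolding eta eps using root_mult_root_le[OF \<open>0 < n\<close> _ _ _ CF] k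
    by (simp add: d C_def sum_nonneg)
qed

lemma pow6_powr_minus_sixth:
  assumes "0 < k"
  shows "real (k ^ 6) powr (-1/6) = 1 / real k"
proof -
  have "real (k ^ 6) powr (-1/6) = (real k powr 6) powr (-1/6)"
    using assms by (simp add: powr_realpow)
  also have "\<dots> = real k powr (6 * (-1/6))" by (rule powr_powr)
  also have "\<dots> = real k powr (-1)" by simp
  also have "\<dots> = 1 / real k" using assms by (simp add: powr_minus_divide)
  finally show ?thesis .
qed

theorem theorem3:
  "\<exists>g :: nat \<Rightarrow> real. g \<in> O(\<lambda>n. real n powr (-1/6)) \<and>
     (\<exists>C N. \<forall>n k c M. n \<ge> 1 \<and> n \<ge> N \<and> n = k ^ 6 \<and> (\<exists>j::nat. k = 2 ^ j) \<and>
        valid_model n k c M \<longrightarrow>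
        (1 / 2 powr (real c / real n)) * eta n k M * root n (1 - eps n k M * (2 + g n))
          \<le> C * real n powr (-1/6))"
proof -
  have "(1 / 2 powr (real c / real n)) * eta n k M * root n (1 - eps n k M * (2 + real n powr (-1/6)))
      \<le> 4 * real n powr (-1/6)"
    if "2 ^ 30 \<le> n" "n = k ^ 6" "k = 2 ^ J" "valid_model n k c M" for n k c J M
  proof -
    have "(2::nat) ^ 30 \<le> 2 ^ (6 * J)" using that(1-3) by (simp add: power_mult[symmetric] mult.commute)
    then have "30 \<le> 6 * J" by (rule power_le_imp_le_exp[rotated]) simp
    then have "5 \<le> J" by simp
    then show ?thesis
      using classical_bound[OF that(3) _ that(2,4)] pow6_powr_minus_sixth[of k] that(2,3) by simp
  qed
  then show ?thesis
    by (intro exI[of _ "\<lambda>n. real n powr (-1/6)"] conjI exI[of _ 4] exI[of _ "2 ^ 30"]) auto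
qed

end
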